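(* Let $U$ be the transition matrix of a quantum random walk (QRW) on $\mathcal I=\mathbb Z$ or on $\mathcal I=\mathbb Z_{\ge 0}$ with arbitrary non trivial (not necessarily equal) coins, and let $\mu_n$ ($n\ge 0$) denote the $n$-th moment of the orthogonality measure associated with the walk (scalar if $\mathcal I=\mathbb Z_{\ge0}$, $2\times2$ matrix valued if $\mathcal I=\mathbb Z$). Then, as $n\to\infty$: (1) $U^n$ converges weakly to zero if and only if $\mu_n\to 0$. (2) For any sequence $(e^{i\theta_n})_{n\ge0}$ of phases ($\theta_n\in\mathbb R$), $e^{-i\theta_n}U^n$ has a non null weak limit if and only if $e^{-i\theta_n}\mu_n$ converges to a non null limit and $\lim_{n\to\infty}e^{i(\theta_{n+1}-\theta_n)}$ exists.
   Context: Coins: for each site $i\in\mathcal I$, $C_i=\begin{pmatrix}c^i_{11}&c^i_{12}\\ c^i_{21}&c^i_{22}\end{pmatrix}$ is a $2\times2$ unitary matrix; it is called non trivial if $c^i_{11}\neq0$ (equivalently $c^i_{22}\ne0$). All coins are assumed non trivial. The Hilbert space is $\ell^2$ over the pure states $|i\rangle\otimes|s\rangle$, $i\in\mathcal I$, $s\in\{\uparrow,\downarrow\}$; a matrix $U=(U_{j,k})$ indexed by pure states has $U_{j,k}$ = amplitude of the one-step transition from $j$ to $k$, states evolve as row vectors $\psi_n=\psi_0U^n$. Case $\mathcal I=\mathbb Z_{\ge0}$: number the pure states $|0\uparrow\rangle,|0\downarrow\rangle,|1\uparrow\rangle,|1\downarrow\rangle,\dots$ as $0,1,2,3,\dots$ (so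 $|i\uparrow\rangle=2i$, $|i\downarrow\rangle=2i+1$). The unitary transition matrix $U$ has as only non-zero entries: $U_{2i,2i+2}=c^i_{11}$, $U_{2i+1,2i+2}=c^i_{12}$ for $i\ge0$; $U_{2i,2i-1}=c^i_{21}$, $U_{2i+1,2i-1}=c^i_{22}$ for $i\ge1$; and $U_{0,0}=c^0_{21}$, $U_{1,0}=c^0_{22}$. The associated orthogonality measure $\mu$ is the unique probability measure on the unit circle $\mathbb T$ with $\int_{\mathbb T}z^n\,d\mu(z)=(U^n)_{0,0}$ for all $n\in\mathbb Z$; its moments are $\mu_n=\int_{\mathbb T}z^n d\mu$. Case $\mathcal I=\mathbb Z$: the unitary transition matrix is given by $|i\uparrow\rangle\mapsto c^i_{11}|i+1\uparrow\rangle+c^i_{21}|i-1\downarrow\rangle$, $|i\downarrow\rangle\mapsto c^i_{12}|i+1\uparrow\rangle+c^i_{22}|i-1\downarrow\rangle$ (i.e. $U_{i\uparrow,(i+1)\uparrow}=c^i_{11}$, $U_{i\uparrow,(i-1)\downarrow}=c^i_{21}$, $U_{i\downarrow,(i+1)\uparrow}=c^i_{12}$, $U_{i\downarrow,(i-1)\downarrow}=c^i_{22}$, all other entries $0$). Reorder ("fold") the pure states as $0,1,2,\dots$ via $4m\mapsto|m\uparrow\rangle$, $4m+1\mapsto|-(m+1)\downarrow\rangle$, $4m+2\mapsto|-(m+1)\uparrow\rangle$, $4m+3\mapsto|m\downarrow\rangle$ ($m\ge0$), and let $\mathbf U$ be $U$ in this order, viewed as a matrix of $2\times2$ blocks $(\mathbf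 U)_{j,k}$ (rows $2j,2j+1$, columns $2k,2k+1$). The associated orthogonality measure $\boldsymbol\mu$ is the unique $2\times2$ positive semidefinite matrix valued measure on $\mathbb T$ with $\int_{\mathbb T}z^n d\boldsymbol\mu(z)=(\mathbf U^n)_{0,0}$ for all $n\in\mathbb Z$; its moments are $\boldsymbol\mu_n=\int_{\mathbb T}z^nd\boldsymbol\mu$. Weak convergence: a sequence of (uniformly bounded) matrices $A_n$ converges weakly to $A$ if $(A_n)_{j,k}\to A_{j,k}$ for all indices $j,k$. *)

theory Defs
  imports "HOL-Analysis.Analysis"
begin

text \<open>A coin is a 2x2 complex matrix; entry c_{rs} is C\$r\$s with r,s in {1,2}
  (elements of the numeral type 2).\<close>

definition unitary2 :: "complex^2^2 \<Rightarrow> bool" where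
  "unitary2 C \<longleftrightarrow> C ** (\<chi> i j. cnj (C $ j $ i)) = mat 1"

definition nontrivial_coin :: "complex^2^2 \<Rightarrow> bool" where
  "nontrivial_coin C \<longleftrightarrow> C $ 1 $ 1 \<noteq> 0"

text \<open>Matrices indexed by pure states; U j k = amplitude of transition j to k.  All matrices
  used here are row-finite, so the sums are finite sums.\<close>

fun mpow :: "('a \<Rightarrow> 'a \<Rightarrow> complex) \<Rightarrow> nat \<Rightarrow> 'a \<Rightarrow> 'a \<Rightarrow> complex" where
  "mpow U 0 j k = (if j = k then 1 else 0)"
| "mpow U (Suc n) j k = (\<Sum>\<^sub>\<infinity> l. mpow U n j l * U l k)"

definition weak_conv :: "(nat \<Rightarrow> 'a \<Rightarrow> 'a \<Rightarrow> complex) \<Rightarrow> ('a \<Rightarrow> 'a \<Rightarrow> complex) \<Rightarrow> bool" where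
  "weak_conv A L \<longleftrightarrow> (\<forall>j k. (\<lambda>n. A n j k) \<longlonglongrightarrow> L j k)"

text \<open>State 2i = |i up>, 2i+1 = |i down>. spin index s = 1 for up, 2 for down.\<close>

definition spin_half :: "nat \<Rightarrow> 2" where
  "spin_half j = (if even j then 1 else 2)"

definition U_half :: "(nat \<Rightarrow> complex^2^2) \<Rightarrow> nat \<Rightarrow> nat \<Rightarrow> complex" where
  "U_half c j k =
    (let i = j div 2; s = spin_half j in
      if k = 2*i + 2 then c i $ 1 $ s
      else if i \<ge> 1 \<and> k = 2*i - 1 then c i $ 2 $ s
      else if i = 0 \<and> k = 0 then c 0 $ 2 $ s
      else 0)"

text \<open>Moments of the orthogonality measure: mu_n = (U^n)_{0,0}.\<close>
definition mom_half :: "(nat \<Rightarrow> complex^2^2) \<Rightarrow> nat \<Rightarrow> complex" where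
  "mom_half c n = mpow (U_half c) n 0 0"

text \<open>Pure states (i, b): b = True means up, b = False means down.\<close>

definition spin_idx :: "bool \<Rightarrow> 2" where
  "spin_idx b = (if b then 1 else 2)"

definition U_Z :: "(int \<Rightarrow> complex^2^2) \<Rightarrow> int \<times> bool \<Rightarrow> int \<times> bool \<Rightarrow> complex" where
  "U_Z c x y =
    (let i = fst x; s = spin_idx (snd x) in
      if fst y = i + 1 \<and> snd y then c i $ 1 $ s
      else if fst y = i - 1 \<and> \<not> snd y then c i $ 2 $ s
      else 0)"

definition fold_state :: "nat \<Rightarrow> int \<times> bool" where
  "fold_state p =
    (let m = int (p div 4) in
      if p mod 4 = 0 then (m, True)
      else if p mod 4 = 1 then (-(m+1), False)
      else if p mod 4 = 2 then (-(m+1), True)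
      else (m, False))"

definition U_fold :: "(int \<Rightarrow> complex^2^2) \<Rightarrow> nat \<Rightarrow> nat \<Rightarrow> complex" where
  "U_fold c p q = U_Z c (fold_state p) (fold_state q)"

definition idx2 :: "2 \<Rightarrow> nat" where
  "idx2 a = (if a = 1 then 0 else 1)"

definition block :: "(nat \<Rightarrow> nat \<Rightarrow> complex) \<Rightarrow> nat \<Rightarrow> nat \<Rightarrow> complex^2^2" where
  "block M j k = (\<chi> a b. M (2*j + idx2 a) (2*k + idx2 b))"

definition mom_Z :: "(int \<Rightarrow> complex^2^2) \<Rightarrow> nat \<Rightarrow> complex^2^2" where
  "mom_Z c n = block (mpow (U_fold c) n) 0 0"

definition cscale :: "complex \<Rightarrow> complex^2^2 \<Rightarrow> complex^2^2" where
  "cscale z M = (\<chi> a b. z * M $ a $ b)"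

end

theory Submission
  imports Defs
begin

text \<open>The moments determine every entry of U^n through the three-term relations of the walk.
  Reading U^(n+1) = U U^n = U^n U entrywise expresses the entry sequence at a neighbouring site
  as a combination of shifted entry sequences; since the diagonal coin entries c_11 and c_22 are
  non-zero (the latter by unitarity), these relations can be solved for the new site. Hence every
  entry sequence lies in the smallest set of sequences that contains the moment sequences and is
  closed under linear combinations, shifts and inverse shifts. Tending to zero is preserved by
  these operations, and so is convergence of exp(-i theta_n) f_n once the phase ratio
  exp(i (theta_(n+1) - theta_n)) converges. Conversely, a non-null weak limit L forces the phase
  ratio to converge: exp(-i theta_n) (U^(n+1))_jk tends to (L U)_jk, while
  exp(-i theta_(n+1)) (U^(n+1))_jk tends to L_jk, which can be chosen non-zero.\<close>

section \<open>Sequences generated by shifts and linear combinations\<close>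

text \<open>The inverse shift leaves the initial term unconstrained, which is harmless because only the
  asymptotic behaviour of the generated sequences matters.\<close>

inductive shift_span :: "(nat \<Rightarrow> complex) set \<Rightarrow> (nat \<Rightarrow> complex) \<Rightarrow> bool" for M where
  base: "f \<in> M \<Longrightarrow> shift_span M f"
| lincomb: "shift_span M f \<Longrightarrow> shift_span M g \<Longrightarrow> shift_span M (\<lambda>n. a * f n + b * g n)"
| shift: "shift_span M f \<Longrightarrow> shift_span M (\<lambda>n. f (Suc n))"
| unshift: "shift_span M (\<lambda>n. f (Suc n)) \<Longrightarrow> shift_span M f"

lemma shift_span_trans:
  "shift_span M' f \<Longrightarrow> (\<And>g. g \<in> M' \<Longrightarrow> shift_span M g) \<Longrightarrow> shift_span M f"
  by (induction rule: shift_span.induct) (auto intro: shift_span.intros)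

lemma shift_span_recurrence:
  assumes "shift_span M f" "shift_span M g" "\<And>n. h (Suc n) = a * f n + b * g n"
  shows "shift_span M h"
proof (rule shift_span.unshift)
  show "shift_span M (\<lambda>n. h (Suc n))"
    using shift_span.lincomb[OF assms(1,2)] assms(3) by simp
qed

lemma shift_span_solve_recurrence:
  assumes "shift_span M f" "shift_span M g" "c \<noteq> 0" "\<And>n. f (Suc n) = c * h n + a * g n"
  shows "shift_span M h"
proof -
  have "shift_span M (\<lambda>n. (1/c) * f (Suc n) + (-a/c) * g n)"
    using assms by (intro shift_span.lincomb shift_span.shift)
  also have "(\<lambda>n. (1/c) * f (Suc n) + (-a/c) * g n) = h"
    using assms(3,4) by (simp add: field_simps)
  finally show ?thesis .
qed

lemma shift_span_tendsto_zero:
  "shift_span M f \<Longrightarrow> (\<And>g. g \<in> M \<Longrightarrow> g \<longlonglongrightarrow> 0) \<Longrightarrow> f \<longlonglongrightarrow> 0"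
proof (induction rule: shift_span.induct)
  case (lincomb f g a b)
  then show ?case using tendsto_add[OF tendsto_mult_right_zero tendsto_mult_right_zero] by fastforce
next
  case (shift f) then show ?case by (simp add: LIMSEQ_Suc)
next
  case (unshift f) then show ?case by (simp add: LIMSEQ_imp_Suc)
qed auto

lemma shift_span_phase_convergent:
  fixes \<omega> :: "nat \<Rightarrow> complex"
  assumes "shift_span M f" and unit: "\<And>n. norm (\<omega> n) = 1"
    and ratio: "convergent (\<lambda>n. \<omega> n / \<omega> (Suc n))"
    and "\<And>g. g \<in> M \<Longrightarrow> convergent (\<lambda>n. \<omega> n * g n)"
  shows "convergent (\<lambda>n. \<omega> n * f n)"
  using assms(1,4)
proof (induction rule: shift_span.induct)
  case (base f) then show ?case by auto
next
  case (lincomb f g a b)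
  then obtain x y where "(\<lambda>n. \<omega> n * f n) \<longlonglongrightarrow> x" "(\<lambda>n. \<omega> n * g n) \<longlonglongrightarrow> y"
    by (auto simp: convergent_def)
  then have "(\<lambda>n. a * (\<omega> n * f n) + b * (\<omega> n * g n)) \<longlonglongrightarrow> a * x + b * y"
    by (intro tendsto_intros)
  then show ?case by (auto simp: convergent_def algebra_simps)
next
  case (shift f)
  then obtain x where x: "(\<lambda>n. \<omega> n * f n) \<longlonglongrightarrow> x" by (auto simp: convergent_def)
  from ratio obtain \<rho> where \<rho>: "(\<lambda>n. \<omega> n / \<omega> (Suc n)) \<longlonglongrightarrow> \<rho>" by (auto simp: convergent_def)
  have "(\<lambda>n. \<omega> n / \<omega> (Suc n) * (\<omega> (Suc n) * f (Suc n))) \<longlonglongrightarrow> \<rho> * x"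
    by (intro tendsto_intros \<rho> LIMSEQ_Suc[OF x])
  moreover have "\<omega> n / \<omega> (Suc n) * (\<omega> (Suc n) * f (Suc n)) = \<omega> n * f (Suc n)" for n
    using unit[of "Suc n"] by (auto simp: field_simps)
  ultimately show ?case by (auto simp: convergent_def)
next
  case (unshift f)
  then obtain x where x: "(\<lambda>n. \<omega> n * f (Suc n)) \<longlonglongrightarrow> x" by (auto simp: convergent_def)
  from ratio obtain \<rho> where \<rho>: "(\<lambda>n. \<omega> n / \<omega> (Suc n)) \<longlonglongrightarrow> \<rho>" by (auto simp: convergent_def)
  have "(\<lambda>n. norm (\<omega> n / \<omega> (Suc n))) \<longlonglongrightarrow> norm \<rho>" by (intro tendsto_intros \<rho>)
  moreover have "(\<lambda>n. norm (\<omega> n / \<omega> (Suc n))) = (\<lambda>n. 1)" using unit by (simp add: norm_divide)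
  ultimately have "norm \<rho> = 1" using LIMSEQ_unique[OF _ tendsto_const] by metis
  then have "(\<lambda>n. inverse (\<omega> n / \<omega> (Suc n)) * (\<omega> n * f (Suc n))) \<longlonglongrightarrow> inverse \<rho> * x"
    by (intro tendsto_intros \<rho> x) auto
  moreover have "inverse (\<omega> n / \<omega> (Suc n)) * (\<omega> n * f (Suc n)) = \<omega> (Suc n) * f (Suc n)" for n
    using unit[of n] by (auto simp: field_simps)
  ultimately have "convergent (\<lambda>n. \<omega> (Suc n) * f (Suc n))" by (auto simp: convergent_def)
  then show ?case by (rule convergent_Suc_iff[THEN iffD1])
qed

section \<open>Powers of row-finite matrices\<close>

lemma infsum_eq_sum_finite_support:
  fixes f :: "'a \<Rightarrow> complex"
  assumes "finite S" "\<And>x. x \<notin> S \<Longrightarrow> f x = 0"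
  shows "(\<Sum>\<^sub>\<infinity>x. f x) = sum f S"
proof -
  have "infsum f UNIV = infsum f S"
    by (rule infsum_cong_neutral) (use assms in auto)
  then show ?thesis using assms by simp
qed

lemma infsum_two_points:
  fixes f :: "'a \<Rightarrow> complex"
  assumes "a \<noteq> b" "\<And>x. x \<noteq> a \<Longrightarrow> x \<noteq> b \<Longrightarrow> f x = 0"
  shows "(\<Sum>\<^sub>\<infinity>x. f x) = f a + f b"
  using infsum_eq_sum_finite_support[of "{a,b}" f] assms by auto

lemma infsum_one_point:
  fixes f :: "'a \<Rightarrow> complex"
  assumes "\<And>x. x \<noteq> a \<Longrightarrow> f x = 0"
  shows "(\<Sum>\<^sub>\<infinity>x. f x) = f a"
  using infsum_eq_sum_finite_support[of "{a}" f] assms by auto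

lemma mpow_row_finite:
  assumes row_finite: "\<And>j. finite {l. U j l \<noteq> 0}"
  shows "finite {l. mpow U n j l \<noteq> 0}"
proof (induction n arbitrary: j)
  case (Suc n)
  have "{l. mpow U (Suc n) j l \<noteq> 0} \<subseteq> (\<Union>m\<in>{m. mpow U n j m \<noteq> 0}. {l. U m l \<noteq> 0})"
  proof
    fix l assume "l \<in> {l. mpow U (Suc n) j l \<noteq> 0}"
    then obtain m where "mpow U n j m * U m l \<noteq> 0"
      using infsum_0[of UNIV "\<lambda>m. mpow U n j m * U m l"] by auto
    then show "l \<in> (\<Union>m\<in>{m. mpow U n j m \<noteq> 0}. {l. U m l \<noteq> 0})" by auto
  qed
  then show ?case using Suc row_finite by (auto intro: finite_subset)
qed simp

lemma mpow_Suc_left: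
  assumes row_finite: "\<And>j. finite {l. U j l \<noteq> 0}"
  shows "mpow U (Suc n) j k = (\<Sum>\<^sub>\<infinity>l. U j l * mpow U n l k)"
proof (induction n arbitrary: j k)
  case 0
  have "(\<Sum>\<^sub>\<infinity>l. mpow U 0 j l * U l k) = mpow U 0 j j * U j k"
    by (rule infsum_one_point) simp
  moreover have "(\<Sum>\<^sub>\<infinity>l. U j l * mpow U 0 l k) = U j k * mpow U 0 k k"
    by (rule infsum_one_point) simp
  ultimately show ?case by simp
next
  case (Suc n)
  define A where "A = {l. U j l \<noteq> 0}"
  define B where "B = (\<Union>l\<in>A. {m. mpow U n l m \<noteq> 0})"
  have fin_A: "finite A" using row_finite A_def by simp
  have fin_B: "finite B" unfolding B_def using fin_A mpow_row_finite[OF row_finite] by auto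
  have row_j: "mpow U (Suc n) j m = (\<Sum>l\<in>A. U j l * mpow U n l m)" for m
    unfolding Suc.IH by (rule infsum_eq_sum_finite_support) (use fin_A A_def in auto)
  have row_j_zero: "mpow U (Suc n) j m = 0" if "m \<notin> B" for m
    unfolding row_j using that by (auto simp: B_def intro!: sum.neutral)
  have entry_l: "mpow U (Suc n) l k = (\<Sum>m\<in>B. mpow U n l m * U m k)" if "l \<in> A" for l
    unfolding mpow.simps
    by (rule infsum_eq_sum_finite_support) (use fin_B that in \<open>auto simp: B_def\<close>)
  have "mpow U (Suc (Suc n)) j k = (\<Sum>m\<in>B. mpow U (Suc n) j m * U m k)"
    unfolding mpow.simps(2)[of U "Suc n"]
    by (rule infsum_eq_sum_finite_support) (use fin_B row_j_zero in auto)
  also have "\<dots> = (\<Sum>m\<in>B. \<Sum>l\<in>A. U j l * mpow U n l m * U m k)"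
    by (simp only: row_j sum_distrib_right)
  also have "\<dots> = (\<Sum>l\<in>A. \<Sum>m\<in>B. U j l * mpow U n l m * U m k)"
    by (rule sum.swap)
  also have "\<dots> = (\<Sum>l\<in>A. U j l * mpow U (Suc n) l k)"
    by (intro sum.cong) (simp_all only: entry_l sum_distrib_left mult.assoc)
  also have "\<dots> = (\<Sum>\<^sub>\<infinity>l. U j l * mpow U (Suc n) l k)"
    by (rule infsum_eq_sum_finite_support[symmetric]) (use fin_A A_def in auto)
  finally show ?case .
qed

lemma mpow_Suc_left_two_entries:
  assumes "\<And>j. finite {l. U j l \<noteq> 0}" "a \<noteq> b" "\<And>l. l \<noteq> a \<Longrightarrow> l \<noteq> b \<Longrightarrow> U j l = 0"
  shows "mpow U (Suc n) j k = U j a * mpow U n a k + U j b * mpow U n b k"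
  unfolding mpow_Suc_left[OF assms(1)] by (rule infsum_two_points) (use assms in auto)

lemma mpow_Suc_right_two_entries:
  assumes "a \<noteq> b" "\<And>l. l \<noteq> a \<Longrightarrow> l \<noteq> b \<Longrightarrow> U l k = 0"
  shows "mpow U (Suc n) j k = U a k * mpow U n j a + U b k * mpow U n j b"
  unfolding mpow.simps by (subst infsum_two_points[OF assms(1)]) (use assms in auto)

section \<open>Weak limits of phase-twisted powers\<close>

lemma weak_conv_zero_iff_generators:
  assumes span: "\<And>j k. shift_span M (\<lambda>n. mpow U n j k)"
    and entries: "\<And>g. g \<in> M \<Longrightarrow> \<exists>j k. g = (\<lambda>n. mpow U n j k)"
  shows "weak_conv (\<lambda>n. mpow U n) (\<lambda>_ _. 0) \<longleftrightarrow> (\<forall>g\<in>M. g \<longlonglongrightarrow> 0)"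
proof
  assume "weak_conv (\<lambda>n. mpow U n) (\<lambda>_ _. 0)"
  then show "\<forall>g\<in>M. g \<longlonglongrightarrow> 0" using entries unfolding weak_conv_def by fastforce
next
  assume "\<forall>g\<in>M. g \<longlonglongrightarrow> 0"
  then show "weak_conv (\<lambda>n. mpow U n) (\<lambda>_ _. 0)"
    unfolding weak_conv_def by (auto intro: shift_span_tendsto_zero[OF span])
qed

lemma phase_weak_limit_imp_ratio_convergent:
  fixes \<omega> :: "nat \<Rightarrow> complex"
  assumes col_finite: "finite {l. U l k \<noteq> 0}"
    and lim: "\<And>l. (\<lambda>n. \<omega> n * mpow U n j l) \<longlonglongrightarrow> L l"
    and nonzero: "L k \<noteq> 0"
  shows "convergent (\<lambda>n. \<omega> n / \<omega> (Suc n))"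
proof -
  define S where "S = {l. U l k \<noteq> 0}"
  have num_eq: "\<omega> n * mpow U (Suc n) j k = (\<Sum>l\<in>S. (\<omega> n * mpow U n j l) * U l k)" for n
  proof -
    have "mpow U (Suc n) j k = (\<Sum>l\<in>S. mpow U n j l * U l k)"
      unfolding mpow.simps by (rule infsum_eq_sum_finite_support) (use col_finite S_def in auto)
    then show ?thesis by (simp add: sum_distrib_left mult.assoc)
  qed
  have num: "(\<lambda>n. \<omega> n * mpow U (Suc n) j k) \<longlonglongrightarrow> (\<Sum>l\<in>S. L l * U l k)"
    unfolding num_eq by (intro tendsto_intros lim)
  have den: "(\<lambda>n. \<omega> (Suc n) * mpow U (Suc n) j k) \<longlonglongrightarrow> L k"
    using LIMSEQ_Suc[OF lim[of k]] by simp
  have "eventually (\<lambda>n. (\<omega> n * mpow U (Suc n) j k) / (\<omega> (Suc n) * mpow U (Suc n) j k)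
      = \<omega> n / \<omega> (Suc n)) sequentially"
    using tendsto_imp_eventually_ne[OF den nonzero] by eventually_elim auto
  then have "(\<lambda>n. \<omega> n / \<omega> (Suc n)) \<longlonglongrightarrow> (\<Sum>l\<in>S. L l * U l k) / L k"
    by (rule Lim_transform_eventually[OF tendsto_divide[OF num den nonzero]])
  then show ?thesis by (auto simp: convergent_def)
qed

lemma tendsto_zero_unit_mult_iff:
  fixes \<omega> f :: "nat \<Rightarrow> complex"
  assumes "\<And>n. norm (\<omega> n) = 1"
  shows "(\<lambda>n. \<omega> n * f n) \<longlonglongrightarrow> 0 \<longleftrightarrow> f \<longlonglongrightarrow> 0"
proof -
  have "(\<lambda>n. norm (\<omega> n * f n)) = (\<lambda>n. norm (f n))" using assms by (simp add: norm_mult)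
  then show ?thesis by (metis tendsto_norm_zero_iff)
qed

lemma phase_weak_limit_imp_generator_limits:
  fixes \<omega> :: "nat \<Rightarrow> complex"
  assumes span: "\<And>j k. shift_span M (\<lambda>n. mpow U n j k)"
    and entries: "\<And>g. g \<in> M \<Longrightarrow> \<exists>j k. g = (\<lambda>n. mpow U n j k)"
    and col_finite: "\<And>k. finite {l. U l k \<noteq> 0}"
    and unit: "\<And>n. norm (\<omega> n) = 1"
    and "L \<noteq> (\<lambda>_ _. 0)" and weak: "weak_conv (\<lambda>n j k. \<omega> n * mpow U n j k) L"
  shows "(\<exists>g\<in>M. \<exists>l. l \<noteq> 0 \<and> (\<lambda>n. \<omega> n * g n) \<longlonglongrightarrow> l) \<and> (\<forall>g\<in>M. convergent (\<lambda>n. \<omega> n * g n))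
      \<and> convergent (\<lambda>n. \<omega> n / \<omega> (Suc n))"
    (is "?nonzero \<and> ?conv \<and> ?ratio")
proof -
  have lim: "(\<lambda>n. \<omega> n * mpow U n j k) \<longlonglongrightarrow> L j k" for j k
    using weak unfolding weak_conv_def by blast
  have "\<exists>j k. L j k \<noteq> 0"
  proof (rule ccontr)
    assume "\<nexists>j k. L j k \<noteq> 0"
    then have "L = (\<lambda>_ _. 0)" by (intro ext) simp
    with \<open>L \<noteq> (\<lambda>_ _. 0)\<close> show False ..
  qed
  then obtain j k where "L j k \<noteq> 0" by blast
  then have ?ratio by (intro phase_weak_limit_imp_ratio_convergent[OF col_finite lim])
  moreover have ?conv
  proof
    fix g assume "g \<in> M"
    then obtain j' k' where "g = (\<lambda>n. mpow U n j' k')" using entries by blast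
    then show "convergent (\<lambda>n. \<omega> n * g n)" using lim unfolding convergent_def by blast
  qed
  moreover have ?nonzero
  proof (rule ccontr)
    assume "\<not> ?nonzero"
    have "g \<longlonglongrightarrow> 0" if "g \<in> M" for g
    proof -
      from \<open>?conv\<close> that obtain x where x: "(\<lambda>n. \<omega> n * g n) \<longlonglongrightarrow> x"
        unfolding convergent_def by blast
      with \<open>\<not> ?nonzero\<close> that have "x = 0" by blast
      with x show ?thesis by (simp add: tendsto_zero_unit_mult_iff[OF unit])
    qed
    then have "(\<lambda>n. mpow U n j k) \<longlonglongrightarrow> 0" by (rule shift_span_tendsto_zero[OF span])
    then have "(\<lambda>n. \<omega> n * mpow U n j k) \<longlonglongrightarrow> 0" by (simp add: tendsto_zero_unit_mult_iff[OF unit])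
    with \<open>L j k \<noteq> 0\<close> show False using LIMSEQ_unique[OF lim] by blast
  qed
  ultimately show ?thesis by blast
qed

lemma generator_limits_imp_phase_weak_limit:
  fixes \<omega> :: "nat \<Rightarrow> complex"
  assumes span: "\<And>j k. shift_span M (\<lambda>n. mpow U n j k)"
    and entries: "\<And>g. g \<in> M \<Longrightarrow> \<exists>j k. g = (\<lambda>n. mpow U n j k)"
    and unit: "\<And>n. norm (\<omega> n) = 1"
    and nonzero: "\<exists>g\<in>M. \<exists>l. l \<noteq> 0 \<and> (\<lambda>n. \<omega> n * g n) \<longlonglongrightarrow> l"
    and conv: "\<forall>g\<in>M. convergent (\<lambda>n. \<omega> n * g n)"
    and ratio: "convergent (\<lambda>n. \<omega> n / \<omega> (Suc n))"
  shows "\<exists>L. L \<noteq> (\<lambda>_ _. 0) \<and> weak_conv (\<lambda>n j k. \<omega> n * mpow U n j k) L"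
proof -
  define L where "L j k = lim (\<lambda>n. \<omega> n * mpow U n j k)" for j k
  have lim: "(\<lambda>n. \<omega> n * mpow U n j k) \<longlonglongrightarrow> L j k" for j k
    unfolding L_def convergent_LIMSEQ_iff[symmetric]
    by (rule shift_span_phase_convergent[OF span unit ratio]) (use conv in auto)
  from nonzero obtain g l where "g \<in> M" "l \<noteq> 0" and g_lim: "(\<lambda>n. \<omega> n * g n) \<longlonglongrightarrow> l" by blast
  from entries[OF \<open>g \<in> M\<close>] obtain j k where "g = (\<lambda>n. mpow U n j k)" by blast
  with g_lim have "L j k = l" using LIMSEQ_unique[OF lim] by blast
  with \<open>l \<noteq> 0\<close> have "L \<noteq> (\<lambda>_ _. 0)" by (auto dest: fun_cong)
  then show ?thesis using lim unfolding weak_conv_def by blast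
qed

lemma phase_weak_limit_iff_generators:
  fixes \<omega> :: "nat \<Rightarrow> complex"
  assumes span: "\<And>j k. shift_span M (\<lambda>n. mpow U n j k)"
    and entries: "\<And>g. g \<in> M \<Longrightarrow> \<exists>j k. g = (\<lambda>n. mpow U n j k)"
    and col_finite: "\<And>k. finite {l. U l k \<noteq> 0}"
    and unit: "\<And>n. norm (\<omega> n) = 1"
  shows "(\<exists>L. L \<noteq> (\<lambda>_ _. 0) \<and> weak_conv (\<lambda>n j k. \<omega> n * mpow U n j k) L) \<longleftrightarrow>
    (\<exists>g\<in>M. \<exists>l. l \<noteq> 0 \<and> (\<lambda>n. \<omega> n * g n) \<longlonglongrightarrow> l) \<and> (\<forall>g\<in>M. convergent (\<lambda>n. \<omega> n * g n))
      \<and> convergent (\<lambda>n. \<omega> n / \<omega> (Suc n))"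
proof
  assume "\<exists>L. L \<noteq> (\<lambda>_ _. 0) \<and> weak_conv (\<lambda>n j k. \<omega> n * mpow U n j k) L"
  then obtain L where "L \<noteq> (\<lambda>_ _. 0)" "weak_conv (\<lambda>n j k. \<omega> n * mpow U n j k) L" by blast
  with span entries col_finite unit show "(\<exists>g\<in>M. \<exists>l. l \<noteq> 0 \<and> (\<lambda>n. \<omega> n * g n) \<longlonglongrightarrow> l)
      \<and> (\<forall>g\<in>M. convergent (\<lambda>n. \<omega> n * g n)) \<and> convergent (\<lambda>n. \<omega> n / \<omega> (Suc n))"
    by (rule phase_weak_limit_imp_generator_limits)
next
  assume "(\<exists>g\<in>M. \<exists>l. l \<noteq> 0 \<and> (\<lambda>n. \<omega> n * g n) \<longlonglongrightarrow> l)
      \<and> (\<forall>g\<in>M. convergent (\<lambda>n. \<omega> n * g n)) \<and> convergent (\<lambda>n. \<omega> n / \<omega> (Suc n))"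
  with span entries unit show "\<exists>L. L \<noteq> (\<lambda>_ _. 0) \<and> weak_conv (\<lambda>n j k. \<omega> n * mpow U n j k) L"
    by (intro generator_limits_imp_phase_weak_limit) auto
qed

lemma exp_phase_ratio:
  "exp (- \<i> * of_real s) / exp (- \<i> * of_real t) = exp (\<i> * of_real (t - s))"
  by (simp add: exp_diff[symmetric] algebra_simps)

lemma norm_exp_minus_i_times: "norm (exp (- \<i> * of_real t)) = 1"
  by (simp add: norm_exp)

lemma tendsto_vec_vec_iff:
  fixes X :: "nat \<Rightarrow> 'x::topological_space^'n^'m"
  shows "X \<longlonglongrightarrow> l \<longleftrightarrow> (\<forall>a b. (\<lambda>n. X n $ a $ b) \<longlonglongrightarrow> l $ a $ b)"
proof
  assume "X \<longlonglongrightarrow> l"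
  then show "\<forall>a b. (\<lambda>n. X n $ a $ b) \<longlonglongrightarrow> l $ a $ b" by (intro allI tendsto_vec_nth)
next
  assume "\<forall>a b. (\<lambda>n. X n $ a $ b) \<longlonglongrightarrow> l $ a $ b"
  then show "X \<longlonglongrightarrow> l" by (intro vec_tendstoI) blast
qed

lemma nonzero_limit_vec_vec_iff:
  fixes X :: "nat \<Rightarrow> 'x::real_normed_vector^'n^'m"
  shows "(\<exists>l. l \<noteq> 0 \<and> X \<longlonglongrightarrow> l) \<longleftrightarrow>
    (\<exists>a b l. l \<noteq> 0 \<and> (\<lambda>n. X n $ a $ b) \<longlonglongrightarrow> l) \<and> (\<forall>a b. convergent (\<lambda>n. X n $ a $ b))"
proof
  assume "\<exists>l. l \<noteq> 0 \<and> X \<longlonglongrightarrow> l"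
  then obtain l where "l \<noteq> 0" and lim: "\<And>a b. (\<lambda>n. X n $ a $ b) \<longlonglongrightarrow> l $ a $ b"
    unfolding tendsto_vec_vec_iff by blast
  moreover from \<open>l \<noteq> 0\<close> obtain a b where "l $ a $ b \<noteq> 0" by (metis vec_eq_iff zero_index)
  ultimately show "(\<exists>a b l. l \<noteq> 0 \<and> (\<lambda>n. X n $ a $ b) \<longlonglongrightarrow> l) \<and> (\<forall>a b. convergent (\<lambda>n. X n $ a $ b))"
    unfolding convergent_def by blast
next
  assume conds: "(\<exists>a b l. l \<noteq> 0 \<and> (\<lambda>n. X n $ a $ b) \<longlonglongrightarrow> l) \<and> (\<forall>a b. convergent (\<lambda>n. X n $ a $ b))"
  define l where "l = (\<chi> a b. lim (\<lambda>n. X n $ a $ b))"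
  have lim: "(\<lambda>n. X n $ a $ b) \<longlonglongrightarrow> l $ a $ b" for a b
    unfolding l_def using conds by (simp add: convergent_LIMSEQ_iff)
  from conds obtain a b l' where "l' \<noteq> 0" "(\<lambda>n. X n $ a $ b) \<longlonglongrightarrow> l'" by blast
  with lim have "l $ a $ b \<noteq> 0" using LIMSEQ_unique by blast
  then have "l \<noteq> 0" by auto
  with lim show "\<exists>l. l \<noteq> 0 \<and> X \<longlonglongrightarrow> l" unfolding tendsto_vec_vec_iff by blast
qed

section \<open>The walk on the half line\<close>

lemma U_half_eq_0:
  assumes "\<nexists>q. (l = 2*q \<or> l = 2*q+1) \<and> (k = 2*q+2 \<or> (q \<ge> 1 \<and> k = 2*q-1) \<or> (q = 0 \<and> k = 0))"
  shows "U_half c l k = 0"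
proof -
  have "l = 2 * (l div 2) \<or> l = 2 * (l div 2) + 1" by presburger
  with assms show ?thesis by (auto simp: U_half_def Let_def)
qed

lemma U_half_row_finite: "finite {l. U_half c j l \<noteq> 0}"
proof (rule finite_subset)
  show "{l. U_half c j l \<noteq> 0} \<subseteq> {2*(j div 2)+2, 2*(j div 2)-1, 0}"
    unfolding U_half_def Let_def by (auto split: if_splits)
qed simp

lemma U_half_col_finite: "finite {l. U_half c l k \<noteq> 0}"
proof (rule finite_subset)
  show "{l. U_half c l k \<noteq> 0} \<subseteq> {..k+2}"
  proof
    fix l assume "l \<in> {l. U_half c l k \<noteq> 0}"
    then have "k = 2*(l div 2)+2 \<or> (l div 2 \<ge> 1 \<and> k = 2*(l div 2)-1) \<or> (l div 2 = 0 \<and> k = 0)"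
      unfolding U_half_def Let_def by (auto split: if_splits)
    then show "l \<in> {..k+2}" by auto
  qed
qed simp

lemma U_half_pow_Suc_row_0:
  "mpow (U_half c) (Suc n) 0 k = c 0 $ 1 $ 1 * mpow (U_half c) n 2 k + c 0 $ 2 $ 1 * mpow (U_half c) n 0 k"
proof -
  have "mpow (U_half c) (Suc n) 0 k = U_half c 0 2 * mpow (U_half c) n 2 k + U_half c 0 0 * mpow (U_half c) n 0 k"
    by (rule mpow_Suc_left_two_entries[OF U_half_row_finite], simp, rule U_half_eq_0, presburger)
  then show ?thesis by (simp add: U_half_def spin_half_def Let_def)
qed

lemma U_half_pow_Suc_row_1:
  "mpow (U_half c) (Suc n) 1 k = c 0 $ 1 $ 2 * mpow (U_half c) n 2 k + c 0 $ 2 $ 2 * mpow (U_half c) n 0 k"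
proof -
  have "mpow (U_half c) (Suc n) 1 k = U_half c 1 2 * mpow (U_half c) n 2 k + U_half c 1 0 * mpow (U_half c) n 0 k"
    by (rule mpow_Suc_left_two_entries[OF U_half_row_finite], simp, rule U_half_eq_0, presburger)
  then show ?thesis by (simp add: U_half_def spin_half_def Let_def)
qed

lemma U_half_pow_Suc_row_even:
  "mpow (U_half c) (Suc n) (2*m+2) k =
    c (Suc m) $ 1 $ 1 * mpow (U_half c) n (2*m+4) k + c (Suc m) $ 2 $ 1 * mpow (U_half c) n (2*m+1) k"
proof -
  have "mpow (U_half c) (Suc n) (2*m+2) k = U_half c (2*m+2) (2*m+4) * mpow (U_half c) n (2*m+4) k
      + U_half c (2*m+2) (2*m+1) * mpow (U_half c) n (2*m+1) k"
    by (rule mpow_Suc_left_two_entries[OF U_half_row_finite], simp, rule U_half_eq_0, presburger)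
  then show ?thesis by (simp add: U_half_def spin_half_def Let_def)
qed

lemma U_half_pow_Suc_row_odd:
  "mpow (U_half c) (Suc n) (2*m+3) k =
    c (Suc m) $ 1 $ 2 * mpow (U_half c) n (2*m+4) k + c (Suc m) $ 2 $ 2 * mpow (U_half c) n (2*m+1) k"
proof -
  have "mpow (U_half c) (Suc n) (2*m+3) k = U_half c (2*m+3) (2*m+4) * mpow (U_half c) n (2*m+4) k
      + U_half c (2*m+3) (2*m+1) * mpow (U_half c) n (2*m+1) k"
    by (rule mpow_Suc_left_two_entries[OF U_half_row_finite], simp, rule U_half_eq_0, presburger)
  then show ?thesis by (simp add: U_half_def spin_half_def Let_def)
qed

lemma U_half_pow_Suc_col_0:
  "mpow (U_half c) (Suc n) j 0 = c 0 $ 2 $ 1 * mpow (U_half c) n j 0 + c 0 $ 2 $ 2 * mpow (U_half c) n j 1"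
proof -
  have "mpow (U_half c) (Suc n) j 0 = U_half c 0 0 * mpow (U_half c) n j 0 + U_half c 1 0 * mpow (U_half c) n j 1"
    by (rule mpow_Suc_right_two_entries, simp, rule U_half_eq_0, presburger)
  then show ?thesis by (simp add: U_half_def spin_half_def Let_def)
qed

lemma U_half_pow_Suc_col_even:
  "mpow (U_half c) (Suc n) j (2*i+2) =
    c i $ 1 $ 1 * mpow (U_half c) n j (2*i) + c i $ 1 $ 2 * mpow (U_half c) n j (2*i+1)"
proof -
  have "mpow (U_half c) (Suc n) j (2*i+2) = U_half c (2*i) (2*i+2) * mpow (U_half c) n j (2*i)
      + U_half c (2*i+1) (2*i+2) * mpow (U_half c) n j (2*i+1)"
    by (rule mpow_Suc_right_two_entries, simp, rule U_half_eq_0, presburger)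
  then show ?thesis by (simp add: U_half_def spin_half_def Let_def)
qed

lemma U_half_pow_Suc_col_odd:
  "mpow (U_half c) (Suc n) j (2*i+1) =
    c (Suc i) $ 2 $ 1 * mpow (U_half c) n j (2*i+2) + c (Suc i) $ 2 $ 2 * mpow (U_half c) n j (2*i+3)"
proof -
  have "mpow (U_half c) (Suc n) j (2*i+1) = U_half c (2*i+2) (2*i+1) * mpow (U_half c) n j (2*i+2)
      + U_half c (2*i+3) (2*i+1) * mpow (U_half c) n j (2*i+3)"
    by (rule mpow_Suc_right_two_entries, simp, rule U_half_eq_0, presburger)
  then show ?thesis by (simp add: U_half_def spin_half_def Let_def)
qed

lemma U_half_row_0_in_moment_span:
  assumes c22: "\<And>i. c i $ 2 $ 2 \<noteq> 0"
  shows "shift_span {mom_half c} (\<lambda>n. mpow (U_half c) n 0 (2*i)) \<and>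
         shift_span {mom_half c} (\<lambda>n. mpow (U_half c) n 0 (2*i+1))"
proof (induction i)
  case 0
  have mom: "shift_span {mom_half c} (\<lambda>n. mpow (U_half c) n 0 0)"
    by (rule shift_span.base) (simp add: mom_half_def fun_eq_iff)
  moreover have "shift_span {mom_half c} (\<lambda>n. mpow (U_half c) n 0 1)"
  proof (rule shift_span_solve_recurrence[OF mom mom c22[of 0]])
    show "mpow (U_half c) (Suc n) 0 0 = c 0 $ 2 $ 2 * mpow (U_half c) n 0 1 + c 0 $ 2 $ 1 * mpow (U_half c) n 0 0" for n
      by (subst U_half_pow_Suc_col_0) (rule add.commute)
  qed
  ultimately show ?case by simp
next
  case (Suc i)
  have even: "shift_span {mom_half c} (\<lambda>n. mpow (U_half c) n 0 (2*i+2))"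
  proof (rule shift_span_recurrence[OF Suc.IH[THEN conjunct1] Suc.IH[THEN conjunct2]])
    show "mpow (U_half c) (Suc n) 0 (2*i+2) =
        c i $ 1 $ 1 * mpow (U_half c) n 0 (2*i) + c i $ 1 $ 2 * mpow (U_half c) n 0 (2*i+1)" for n
      by (rule U_half_pow_Suc_col_even)
  qed
  moreover have "shift_span {mom_half c} (\<lambda>n. mpow (U_half c) n 0 (2*i+3))"
  proof (rule shift_span_solve_recurrence[OF Suc.IH[THEN conjunct2] even c22[of "Suc i"]])
    show "mpow (U_half c) (Suc n) 0 (2*i+1) = c (Suc i) $ 2 $ 2 * mpow (U_half c) n 0 (2*i+3)
        + c (Suc i) $ 2 $ 1 * mpow (U_half c) n 0 (2*i+2)" for n
      by (subst U_half_pow_Suc_col_odd) (rule add.commute)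
  qed
  ultimately show ?case by (simp add: numeral_eq_Suc)
qed

lemma U_half_entries_in_column_span:
  assumes c11: "\<And>i. c i $ 1 $ 1 \<noteq> 0"
  shows "shift_span {\<lambda>n. mpow (U_half c) n 0 k} (\<lambda>n. mpow (U_half c) n (2*m+1) k) \<and>
         shift_span {\<lambda>n. mpow (U_half c) n 0 k} (\<lambda>n. mpow (U_half c) n (2*m+2) k)"
proof (induction m)
  case 0
  let ?M = "{\<lambda>n. mpow (U_half c) n 0 k}"
  have row_0: "shift_span ?M (\<lambda>n. mpow (U_half c) n 0 k)" by (rule shift_span.base) simp
  have row_2: "shift_span ?M (\<lambda>n. mpow (U_half c) n 2 k)"
    by (rule shift_span_solve_recurrence[OF row_0 row_0 c11[of 0], where a = "c 0 $ 2 $ 1"])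
      (rule U_half_pow_Suc_row_0)
  moreover have "shift_span ?M (\<lambda>n. mpow (U_half c) n 1 k)"
    by (rule shift_span_recurrence[OF row_2 row_0]) (rule U_half_pow_Suc_row_1)
  ultimately show ?case by (simp add: eval_nat_numeral)
next
  case (Suc m)
  let ?M = "{\<lambda>n. mpow (U_half c) n 0 k}"
  have even: "shift_span ?M (\<lambda>n. mpow (U_half c) n (2*m+4) k)"
    by (rule shift_span_solve_recurrence[OF Suc.IH[THEN conjunct2] Suc.IH[THEN conjunct1]
          c11[of "Suc m"], where a = "c (Suc m) $ 2 $ 1"])
      (rule U_half_pow_Suc_row_even)
  moreover have "shift_span ?M (\<lambda>n. mpow (U_half c) n (2*m+3) k)"
    by (rule shift_span_recurrence[OF even Suc.IH[THEN conjunct1]]) (rule U_half_pow_Suc_row_odd)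
  ultimately show ?case by (simp add: numeral_eq_Suc)
qed

lemma U_half_entries_in_moment_span:
  assumes c11: "\<And>i. c i $ 1 $ 1 \<noteq> 0" and c22: "\<And>i. c i $ 2 $ 2 \<noteq> 0"
  shows "shift_span {mom_half c} (\<lambda>n. mpow (U_half c) n j k)"
proof -
  have entry: "shift_span {\<lambda>n. mpow (U_half c) n 0 k} (\<lambda>n. mpow (U_half c) n j k)"
  proof -
    have "j = 0 \<or> (\<exists>m. j = 2*m+1) \<or> (\<exists>m. j = 2*m+2)" by presburger
    then show ?thesis using U_half_entries_in_column_span[OF c11] by (auto intro: shift_span.base)
  qed
  have row_0: "shift_span {mom_half c} (\<lambda>n. mpow (U_half c) n 0 k)"
  proof -
    have "(\<exists>i. k = 2*i) \<or> (\<exists>i. k = 2*i+1)" by presburger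
    then show ?thesis using U_half_row_0_in_moment_span[OF c22] by auto
  qed
  from entry show ?thesis by (rule shift_span_trans) (use row_0 in simp)
qed

lemma mom_half_generates_entries:
  "g \<in> {mom_half c} \<Longrightarrow> \<exists>j k. g = (\<lambda>n. mpow (U_half c) n j k)"
  by (auto simp: mom_half_def[abs_def])

lemma U_half_weak_conv_zero_iff:
  assumes "\<And>i. c i $ 1 $ 1 \<noteq> 0" "\<And>i. c i $ 2 $ 2 \<noteq> 0"
  shows "weak_conv (\<lambda>n. mpow (U_half c) n) (\<lambda>_ _. 0) \<longleftrightarrow> mom_half c \<longlonglongrightarrow> 0"
  using weak_conv_zero_iff_generators[OF U_half_entries_in_moment_span[where c = c, OF assms]
      mom_half_generates_entries] by simp

lemma U_half_phase_weak_limit_iff: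
  fixes \<theta> :: "nat \<Rightarrow> real"
  assumes "\<And>i. c i $ 1 $ 1 \<noteq> 0" "\<And>i. c i $ 2 $ 2 \<noteq> 0"
  shows "(\<exists>L. L \<noteq> (\<lambda>_ _. 0) \<and>
            weak_conv (\<lambda>n j k. exp (- \<i> * of_real (\<theta> n)) * mpow (U_half c) n j k) L)
       \<longleftrightarrow> (\<exists>l. l \<noteq> 0 \<and> (\<lambda>n. exp (- \<i> * of_real (\<theta> n)) * mom_half c n) \<longlonglongrightarrow> l) \<and>
           convergent (\<lambda>n. exp (\<i> * of_real (\<theta> (Suc n) - \<theta> n)))"
  using phase_weak_limit_iff_generators[where \<omega> = "\<lambda>n. exp (- \<i> * of_real (\<theta> n))",
      OF U_half_entries_in_moment_span[where c = c, OF assms] mom_half_generates_entries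
      U_half_col_finite norm_exp_minus_i_times]
  unfolding exp_phase_ratio by (auto simp: convergent_def)

section \<open>The walk on the integers\<close>

lemma U_Z_nonzero_cases:
  "U_Z c x y \<noteq> 0 \<Longrightarrow> y = (fst x + 1, True) \<or> y = (fst x - 1, False)"
  by (cases y) (auto simp: U_Z_def Let_def split: if_splits)

lemma U_Z_row_finite: "finite {y. U_Z c x y \<noteq> 0}"
  by (rule finite_subset[of _ "{(fst x + 1, True), (fst x - 1, False)}"]) (auto dest: U_Z_nonzero_cases)

lemma U_Z_col_finite: "finite {x. U_Z c x y \<noteq> 0}"
proof (rule finite_subset)
  show "{x. U_Z c x y \<noteq> 0} \<subseteq> {fst y - 1, fst y + 1} \<times> UNIV"
    by (force dest: U_Z_nonzero_cases)
qed simp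

lemma U_Z_pow_Suc_row_up:
  "mpow (U_Z c) (Suc n) (i, True) k =
    c i $ 1 $ 1 * mpow (U_Z c) n (i+1, True) k + c i $ 2 $ 1 * mpow (U_Z c) n (i-1, False) k"
proof -
  have "mpow (U_Z c) (Suc n) (i, True) k = U_Z c (i, True) (i+1, True) * mpow (U_Z c) n (i+1, True) k
      + U_Z c (i, True) (i-1, False) * mpow (U_Z c) n (i-1, False) k"
    by (rule mpow_Suc_left_two_entries[OF U_Z_row_finite]) (auto dest: U_Z_nonzero_cases)
  then show ?thesis by (simp add: U_Z_def spin_idx_def)
qed

lemma U_Z_pow_Suc_row_down:
  "mpow (U_Z c) (Suc n) (i, False) k =
    c i $ 1 $ 2 * mpow (U_Z c) n (i+1, True) k + c i $ 2 $ 2 * mpow (U_Z c) n (i-1, False) k"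
proof -
  have "mpow (U_Z c) (Suc n) (i, False) k = U_Z c (i, False) (i+1, True) * mpow (U_Z c) n (i+1, True) k
      + U_Z c (i, False) (i-1, False) * mpow (U_Z c) n (i-1, False) k"
    by (rule mpow_Suc_left_two_entries[OF U_Z_row_finite]) (auto dest: U_Z_nonzero_cases)
  then show ?thesis by (simp add: U_Z_def spin_idx_def)
qed

lemma U_Z_pow_Suc_col_up:
  "mpow (U_Z c) (Suc n) j (i, True) =
    c (i-1) $ 1 $ 1 * mpow (U_Z c) n j (i-1, True) + c (i-1) $ 1 $ 2 * mpow (U_Z c) n j (i-1, False)"
proof -
  have "mpow (U_Z c) (Suc n) j (i, True) = U_Z c (i-1, True) (i, True) * mpow (U_Z c) n j (i-1, True)
      + U_Z c (i-1, False) (i, True) * mpow (U_Z c) n j (i-1, False)"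
  proof (rule mpow_Suc_right_two_entries)
    fix l :: "int \<times> bool" assume "l \<noteq> (i-1, True)" "l \<noteq> (i-1, False)"
    then show "U_Z c l (i, True) = 0" using U_Z_nonzero_cases[of c l "(i, True)"] by (cases l) auto
  qed simp
  then show ?thesis by (simp add: U_Z_def spin_idx_def)
qed

lemma U_Z_pow_Suc_col_down:
  "mpow (U_Z c) (Suc n) j (i, False) =
    c (i+1) $ 2 $ 1 * mpow (U_Z c) n j (i+1, True) + c (i+1) $ 2 $ 2 * mpow (U_Z c) n j (i+1, False)"
proof -
  have "mpow (U_Z c) (Suc n) j (i, False) = U_Z c (i+1, True) (i, False) * mpow (U_Z c) n j (i+1, True)
      + U_Z c (i+1, False) (i, False) * mpow (U_Z c) n j (i+1, False)"
  proof (rule mpow_Suc_right_two_entries)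
    fix l :: "int \<times> bool" assume "l \<noteq> (i+1, True)" "l \<noteq> (i+1, False)"
    then show "U_Z c l (i, False) = 0" using U_Z_nonzero_cases[of c l "(i, False)"] by (cases l) auto
  qed simp
  then show ?thesis by (simp add: U_Z_def spin_idx_def)
qed

lemma U_Z_entries_in_column_span:
  fixes k :: "int \<times> bool"
  assumes c11: "\<And>i. c i $ 1 $ 1 \<noteq> 0" and c22: "\<And>i. c i $ 2 $ 2 \<noteq> 0"
  defines "M \<equiv> {\<lambda>n. mpow (U_Z c) n (0, True) k, \<lambda>n. mpow (U_Z c) n (-1, False) k}"
  shows "shift_span M (\<lambda>n. mpow (U_Z c) n (i, True) k) \<and>
         shift_span M (\<lambda>n. mpow (U_Z c) n (i - 1, False) k)"
proof (induction i rule: int_induct[where k = 0])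
  case base
  then show ?case by (auto simp: M_def intro: shift_span.base)
next
  case (step1 i)
  have up: "shift_span M (\<lambda>n. mpow (U_Z c) n (i+1, True) k)"
  proof (rule shift_span_solve_recurrence[OF step1(2)[THEN conjunct1] step1(2)[THEN conjunct2] c11])
    show "mpow (U_Z c) (Suc n) (i, True) k =
        c i $ 1 $ 1 * mpow (U_Z c) n (i+1, True) k + c i $ 2 $ 1 * mpow (U_Z c) n (i-1, False) k" for n
      by (rule U_Z_pow_Suc_row_up)
  qed
  moreover have "shift_span M (\<lambda>n. mpow (U_Z c) n (i, False) k)"
  proof (rule shift_span_recurrence[OF up step1(2)[THEN conjunct2]])
    show "mpow (U_Z c) (Suc n) (i, False) k =
        c i $ 1 $ 2 * mpow (U_Z c) n (i+1, True) k + c i $ 2 $ 2 * mpow (U_Z c) n (i-1, False) k" for n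
      by (rule U_Z_pow_Suc_row_down)
  qed
  ultimately show ?case by simp
next
  case (step2 i)
  have down: "shift_span M (\<lambda>n. mpow (U_Z c) n (i-2, False) k)"
  proof (rule shift_span_solve_recurrence[OF step2(2)[THEN conjunct2] step2(2)[THEN conjunct1] c22])
    show "mpow (U_Z c) (Suc n) (i - 1, False) k =
        c (i-1) $ 2 $ 2 * mpow (U_Z c) n (i-2, False) k + c (i-1) $ 1 $ 2 * mpow (U_Z c) n (i, True) k" for n
      using U_Z_pow_Suc_row_down[of c n "i-1" k] by (simp add: algebra_simps)
  qed
  moreover have "shift_span M (\<lambda>n. mpow (U_Z c) n (i-1, True) k)"
  proof (rule shift_span_recurrence[OF step2(2)[THEN conjunct1] down])
    show "mpow (U_Z c) (Suc n) (i - 1, True) k =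
        c (i-1) $ 1 $ 1 * mpow (U_Z c) n (i, True) k + c (i-1) $ 2 $ 1 * mpow (U_Z c) n (i-2, False) k" for n
      using U_Z_pow_Suc_row_up[of c n "i-1" k] by (simp add: algebra_simps)
  qed
  ultimately show ?case by (simp add: diff_diff_eq)
qed

lemma U_Z_entries_in_row_span:
  fixes j :: "int \<times> bool"
  assumes c11: "\<And>i. c i $ 1 $ 1 \<noteq> 0" and c22: "\<And>i. c i $ 2 $ 2 \<noteq> 0"
  defines "M \<equiv> {\<lambda>n. mpow (U_Z c) n j (0, True), \<lambda>n. mpow (U_Z c) n j (-1, False)}"
  shows "shift_span M (\<lambda>n. mpow (U_Z c) n j (i, True)) \<and>
         shift_span M (\<lambda>n. mpow (U_Z c) n j (i - 1, False))"
proof (induction i rule: int_induct[where k = 0])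
  case base
  then show ?case by (auto simp: M_def intro: shift_span.base)
next
  case (step1 i)
  have down: "shift_span M (\<lambda>n. mpow (U_Z c) n j (i, False))"
  proof (rule shift_span_solve_recurrence[OF step1(2)[THEN conjunct2] step1(2)[THEN conjunct1] c22])
    show "mpow (U_Z c) (Suc n) j (i - 1, False) =
        c i $ 2 $ 2 * mpow (U_Z c) n j (i, False) + c i $ 2 $ 1 * mpow (U_Z c) n j (i, True)" for n
      using U_Z_pow_Suc_col_down[of c n j "i-1"] by (simp add: algebra_simps)
  qed
  moreover have "shift_span M (\<lambda>n. mpow (U_Z c) n j (i+1, True))"
  proof (rule shift_span_recurrence[OF step1(2)[THEN conjunct1] down])
    show "mpow (U_Z c) (Suc n) j (i + 1, True) =
        c i $ 1 $ 1 * mpow (U_Z c) n j (i, True) + c i $ 1 $ 2 * mpow (U_Z c) n j (i, False)" for n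
      using U_Z_pow_Suc_col_up[of c n j "i+1"] by simp
  qed
  ultimately show ?case by simp
next
  case (step2 i)
  have up: "shift_span M (\<lambda>n. mpow (U_Z c) n j (i-1, True))"
  proof (rule shift_span_solve_recurrence[OF step2(2)[THEN conjunct1] step2(2)[THEN conjunct2] c11])
    show "mpow (U_Z c) (Suc n) j (i, True) =
        c (i-1) $ 1 $ 1 * mpow (U_Z c) n j (i-1, True) + c (i-1) $ 1 $ 2 * mpow (U_Z c) n j (i-1, False)" for n
      by (rule U_Z_pow_Suc_col_up)
  qed
  moreover have "shift_span M (\<lambda>n. mpow (U_Z c) n j (i-2, False))"
  proof (rule shift_span_recurrence[OF up step2(2)[THEN conjunct2]])
    show "mpow (U_Z c) (Suc n) j (i - 2, False) =
        c (i-1) $ 2 $ 1 * mpow (U_Z c) n j (i-1, True) + c (i-1) $ 2 $ 2 * mpow (U_Z c) n j (i-1, False)" for n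
      using U_Z_pow_Suc_col_down[of c n j "i-2"] by (simp add: algebra_simps)
  qed
  ultimately show ?case by (simp add: diff_diff_eq)
qed

definition unfold_state :: "int \<times> bool \<Rightarrow> nat" where
  "unfold_state x =
    (if fst x \<ge> 0 then (if snd x then 4 * nat (fst x) else 4 * nat (fst x) + 3)
     else (if snd x then 4 * nat (- fst x - 1) + 2 else 4 * nat (- fst x - 1) + 1))"

lemma fold_state_mod_4:
  "fold_state (4*m) = (int m, True)" "fold_state (4*m+1) = (-(int m+1), False)"
  "fold_state (4*m+2) = (-(int m+1), True)" "fold_state (4*m+3) = (int m, False)"
proof -
  have div_mod: "(4*m) div 4 = m" "(4*m) mod 4 = 0" "(4*m+1) div 4 = m" "(4*m+1) mod 4 = 1"
    "(4*m+2) div 4 = m" "(4*m+2) mod 4 = 2" "(4*m+3) div 4 = m" "(4*m+3) mod 4 = 3" by presburger+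
  show "fold_state (4*m) = (int m, True)" "fold_state (4*m+1) = (-(int m+1), False)"
    "fold_state (4*m+2) = (-(int m+1), True)" "fold_state (4*m+3) = (int m, False)"
    unfolding fold_state_def Let_def by (simp_all only: div_mod) simp_all
qed

lemma fold_unfold_state: "fold_state (unfold_state x) = x"
proof (cases x)
  case (Pair i b)
  then show ?thesis
    using fold_state_mod_4[of "nat i"] fold_state_mod_4[of "nat (- i - 1)"]
    by (cases b) (auto simp: unfold_state_def)
qed

lemma unfold_fold_state: "unfold_state (fold_state p) = p"
proof -
  have "p = 4*(p div 4) \<or> p = 4*(p div 4)+1 \<or> p = 4*(p div 4)+2 \<or> p = 4*(p div 4)+3" by presburger
  then show ?thesis
    using fold_state_mod_4[of "p div 4"] by (auto simp: unfold_state_def)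
qed

lemma mpow_U_fold: "mpow (U_fold c) n p q = mpow (U_Z c) n (fold_state p) (fold_state q)"
proof (induction n arbitrary: q)
  case 0
  have "p = q \<longleftrightarrow> fold_state p = fold_state q" by (metis unfold_fold_state)
  then show ?case by simp
next
  case (Suc n)
  show ?case unfolding mpow.simps
    by (rule infsum_reindex_bij_witness[where i = unfold_state and j = fold_state])
       (auto simp: fold_unfold_state unfold_fold_state Suc.IH U_fold_def)
qed

lemma mom_Z_entry:
  "mom_Z c n $ a $ b =
    mpow (U_Z c) n (if a = 1 then (0, True) else (-1, False)) (if b = 1 then (0, True) else (-1, False))"
  by (simp add: mom_Z_def block_def mpow_U_fold idx2_def fold_state_def)

lemma mom_Z_generates_entries:
  "g \<in> {\<lambda>n. mom_Z c n $ a $ b | a b. True} \<Longrightarrow> \<exists>j k. g = (\<lambda>n. mpow (U_Z c) n j k)"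
  unfolding mom_Z_entry by blast

lemma U_Z_entries_in_moment_span:
  assumes c11: "\<And>i. c i $ 1 $ 1 \<noteq> 0" and c22: "\<And>i. c i $ 2 $ 2 \<noteq> 0"
  shows "shift_span {\<lambda>n. mom_Z c n $ a $ b | a b. True} (\<lambda>n. mpow (U_Z c) n x y)"
proof -
  let ?M = "{\<lambda>n. mom_Z c n $ a $ b | a b. True}"
  let ?origin = "{(0, True), (-1, False)} :: (int \<times> bool) set"
  have origin_index: "\<exists>a::2. (if a = 1 then (0, True) else (-1, False)) = z" if "z \<in> ?origin" for z
    using that by (auto intro: exI[of _ 1] exI[of _ 2])
  have moment_entry: "(\<lambda>n. mpow (U_Z c) n j z) \<in> ?M" if "j \<in> ?origin" "z \<in> ?origin" for j z
  proof -
    from origin_index[OF that(1)] origin_index[OF that(2)] obtain a b :: 2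
      where "(if a = 1 then (0, True) else (-1, False)) = j" "(if b = 1 then (0, True) else (-1, False)) = z"
      by blast
    then have "(\<lambda>n. mpow (U_Z c) n j z) = (\<lambda>n. mom_Z c n $ a $ b)" by (simp add: mom_Z_entry)
    then show ?thesis by blast
  qed
  have row_span: "shift_span ?M (\<lambda>n. mpow (U_Z c) n j y)" if "j \<in> ?origin" for j
  proof -
    obtain i b where y: "y = (i, b)" by (cases y)
    have "shift_span {\<lambda>n. mpow (U_Z c) n j (0, True), \<lambda>n. mpow (U_Z c) n j (-1, False)}
        (\<lambda>n. mpow (U_Z c) n j y)"
      using U_Z_entries_in_row_span[OF c11 c22, where j = j and i = i]
        U_Z_entries_in_row_span[OF c11 c22, where j = j and i = "i+1"]
      by (cases b) (simp_all add: y)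
    then show ?thesis
    proof (rule shift_span_trans)
      fix g assume "g \<in> {\<lambda>n. mpow (U_Z c) n j (0, True), \<lambda>n. mpow (U_Z c) n j (-1, False)}"
      then have "g \<in> ?M"
        using moment_entry[OF that, of "(0, True)"] moment_entry[OF that, of "(-1, False)"] by auto
      then show "shift_span ?M g" by (rule shift_span.base)
    qed
  qed
  obtain i b where x: "x = (i, b)" by (cases x)
  have "shift_span {\<lambda>n. mpow (U_Z c) n (0, True) y, \<lambda>n. mpow (U_Z c) n (-1, False) y}
      (\<lambda>n. mpow (U_Z c) n x y)"
    using U_Z_entries_in_column_span[OF c11 c22, where k = y and i = i]
      U_Z_entries_in_column_span[OF c11 c22, where k = y and i = "i+1"]
    by (cases b) (simp_all add: x)
  then show ?thesis
    by (rule shift_span_trans) (use row_span[of "(0, True)"] row_span[of "(-1, False)"] in auto)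
qed

lemma U_Z_weak_conv_zero_iff:
  assumes "\<And>i. c i $ 1 $ 1 \<noteq> 0" "\<And>i. c i $ 2 $ 2 \<noteq> 0"
  shows "weak_conv (\<lambda>n. mpow (U_Z c) n) (\<lambda>_ _. 0) \<longleftrightarrow> mom_Z c \<longlonglongrightarrow> 0"
proof -
  have "weak_conv (\<lambda>n. mpow (U_Z c) n) (\<lambda>_ _. 0) \<longleftrightarrow>
      (\<forall>g\<in>{\<lambda>n. mom_Z c n $ a $ b | a b. True}. g \<longlonglongrightarrow> 0)"
    by (rule weak_conv_zero_iff_generators[OF U_Z_entries_in_moment_span[where c = c, OF assms]
          mom_Z_generates_entries])
  also have "\<dots> \<longleftrightarrow> mom_Z c \<longlonglongrightarrow> 0"
    unfolding tendsto_vec_vec_iff[of "mom_Z c"] by auto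
  finally show ?thesis .
qed

lemma U_Z_phase_weak_limit_iff:
  fixes \<theta> :: "nat \<Rightarrow> real"
  assumes "\<And>i. c i $ 1 $ 1 \<noteq> 0" "\<And>i. c i $ 2 $ 2 \<noteq> 0"
  shows "(\<exists>L. L \<noteq> (\<lambda>_ _. 0) \<and>
            weak_conv (\<lambda>n j k. exp (- \<i> * of_real (\<theta> n)) * mpow (U_Z c) n j k) L)
       \<longleftrightarrow> (\<exists>l. l \<noteq> 0 \<and> (\<lambda>n. cscale (exp (- \<i> * of_real (\<theta> n))) (mom_Z c n)) \<longlonglongrightarrow> l) \<and>
           convergent (\<lambda>n. exp (\<i> * of_real (\<theta> (Suc n) - \<theta> n)))"
proof -
  define \<omega> where "\<omega> n = exp (- \<i> * of_real (\<theta> n))" for n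
  let ?M = "{\<lambda>n. mom_Z c n $ a $ b | a b. True}"
  have "(\<exists>L. L \<noteq> (\<lambda>_ _. 0) \<and> weak_conv (\<lambda>n j k. \<omega> n * mpow (U_Z c) n j k) L) \<longleftrightarrow>
      (\<exists>g\<in>?M. \<exists>l. l \<noteq> 0 \<and> (\<lambda>n. \<omega> n * g n) \<longlonglongrightarrow> l) \<and> (\<forall>g\<in>?M. convergent (\<lambda>n. \<omega> n * g n))
        \<and> convergent (\<lambda>n. \<omega> n / \<omega> (Suc n))"
    unfolding \<omega>_def
    by (rule phase_weak_limit_iff_generators[OF U_Z_entries_in_moment_span[where c = c, OF assms]
          mom_Z_generates_entries U_Z_col_finite norm_exp_minus_i_times])
  also have "\<dots> \<longleftrightarrow> ((\<exists>a b l. l \<noteq> 0 \<and> (\<lambda>n. cscale (\<omega> n) (mom_Z c n) $ a $ b) \<longlonglongrightarrow> l) \<and>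
          (\<forall>a b. convergent (\<lambda>n. cscale (\<omega> n) (mom_Z c n) $ a $ b)))
        \<and> convergent (\<lambda>n. \<omega> n / \<omega> (Suc n))"
  proof -
    have "(\<exists>g\<in>?M. P g) \<longleftrightarrow> (\<exists>a b. P (\<lambda>n. mom_Z c n $ a $ b))"
      and "(\<forall>g\<in>?M. P g) \<longleftrightarrow> (\<forall>a b. P (\<lambda>n. mom_Z c n $ a $ b))" for P by blast+
    then show ?thesis by (simp add: cscale_def)
  qed
  also have "\<dots> \<longleftrightarrow> (\<exists>l. l \<noteq> 0 \<and> (\<lambda>n. cscale (\<omega> n) (mom_Z c n)) \<longlonglongrightarrow> l)
        \<and> convergent (\<lambda>n. \<omega> n / \<omega> (Suc n))"
    by (simp only: nonzero_limit_vec_vec_iff)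
  finally show ?thesis unfolding \<omega>_def exp_phase_ratio .
qed

lemma unitary2_nontrivial_diag_nonzero:
  assumes "unitary2 C" "nontrivial_coin C"
  shows "C $ 1 $ 1 \<noteq> 0" and "C $ 2 $ 2 \<noteq> 0"
proof -
  show c11: "C $ 1 $ 1 \<noteq> 0" using assms(2) by (simp add: nontrivial_coin_def)
  show "C $ 2 $ 2 \<noteq> 0"
  proof
    assume c22: "C $ 2 $ 2 = 0"
    have entry: "(C ** (\<chi> i j. cnj (C $ j $ i))) $ i $ j = (if i = j then 1 else 0)" for i j
      using assms(1) unfolding unitary2_def by (simp add: mat_def)
    have "C $ 2 $ 1 * cnj (C $ 2 $ 1) + C $ 2 $ 2 * cnj (C $ 2 $ 2) = 1"
      using entry[of 2 2] by (simp add: matrix_matrix_mult_def sum_2)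
    with c22 have "C $ 2 $ 1 \<noteq> 0" by auto
    moreover have "C $ 1 $ 1 * cnj (C $ 2 $ 1) + C $ 1 $ 2 * cnj (C $ 2 $ 2) = 0"
      using entry[of 1 2] by (simp add: matrix_matrix_mult_def sum_2)
    ultimately show False using c22 c11 by simp
  qed
qed

theorem proposition1:
  shows
  "(\<forall>c :: nat \<Rightarrow> complex^2^2. (\<forall>i. unitary2 (c i) \<and> nontrivial_coin (c i)) \<longrightarrow>
      ((weak_conv (\<lambda>n. mpow (U_half c) n) (\<lambda>_ _. 0) \<longleftrightarrow> mom_half c \<longlonglongrightarrow> 0) \<and>
       (\<forall>\<theta> :: nat \<Rightarrow> real.
          (\<exists>L. L \<noteq> (\<lambda>_ _. 0) \<and>
              weak_conv (\<lambda>n j k. exp (- \<i> * of_real (\<theta> n)) * mpow (U_half c) n j k) L)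
          \<longleftrightarrow>
          ((\<exists>l. l \<noteq> 0 \<and> (\<lambda>n. exp (- \<i> * of_real (\<theta> n)) * mom_half c n) \<longlonglongrightarrow> l) \<and>
           convergent (\<lambda>n. exp (\<i> * of_real (\<theta> (Suc n) - \<theta> n)))))))
   \<and>
   (\<forall>c :: int \<Rightarrow> complex^2^2. (\<forall>i. unitary2 (c i) \<and> nontrivial_coin (c i)) \<longrightarrow>
      ((weak_conv (\<lambda>n. mpow (U_Z c) n) (\<lambda>_ _. 0) \<longleftrightarrow> mom_Z c \<longlonglongrightarrow> 0) \<and>
       (\<forall>\<theta> :: nat \<Rightarrow> real.
          (\<exists>L. L \<noteq> (\<lambda>_ _. 0) \<and>
              weak_conv (\<lambda>n j k. exp (- \<i> * of_real (\<theta> n)) * mpow (U_Z c) n j k) L)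
          \<longleftrightarrow>
          ((\<exists>l. l \<noteq> 0 \<and> (\<lambda>n. cscale (exp (- \<i> * of_real (\<theta> n))) (mom_Z c n)) \<longlonglongrightarrow> l) \<and>
           convergent (\<lambda>n. exp (\<i> * of_real (\<theta> (Suc n) - \<theta> n)))))))"
  by (intro conjI allI impI U_half_weak_conv_zero_iff U_half_phase_weak_limit_iff
        U_Z_weak_conv_zero_iff U_Z_phase_weak_limit_iff)
     (simp_all add: unitary2_nontrivial_diag_nonzero)

end
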